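(* Let $\mathcal V=\{v^{(1)},\dots,v^{(p)}\}\subset(\mathbb{R}\cup\{-\infty\})^n$ and let $V$ be the $n\times p$ matrix with columns $v^{(k)}$; assume $V$ has no row and no column identically equal to $-\infty$. Let $T$ be the operator $$T_i(x)=\inf_{k\in[p],\,V_{ik}\neq-\infty}\Big[-V_{ik}+\max_{j\in[n],\,j\neq i}(V_{jk}+x_j)\Big],\qquad i\in[n].$$ Then for all $\lambda\in[-\infty,0]$ and all $b\in(\mathbb{R}\cup\{-\infty\})^n$ not identically $-\infty$, $$T(b)\ge\lambda+b\iff\operatorname{dist}_H(\mathcal V,\mathcal H_b)\le-\lambda.$$
   Context: $\mathbb{R}_{\max}=\mathbb{R}\cup\{-\infty\}$, $-\infty+c=-\infty$, $\max\emptyset=-\infty$. For $b$ not identically $-\infty$, $\mathcal H_b=\{y\in\mathbb{R}_{\max}^n:\max_i(b_i+y_i)\text{ is achieved at least twice}\}$. Hilbert's projective metric: $d(x,y)=\inf\{\lambda-\mu:\lambda,\mu\in\mathbb{R},\ \mu+y_i\le x_i\le\lambda+y_i\ \forall i\}\in[0,+\infty]$ (and $d(\bot,\bot)=0$). For sets $A,B$, $\operatorname{dist}_H(A,B)=\sup_{a\in A}\inf_{y\in B}d(a,y)$. *)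

theory Defs
  imports Complex_Main "HOL-Library.Extended_Real"
begin

text \<open>Max-plus semiring R_max = R \<union> {-\<infinity>} is modelled inside ereal, by requiring
  the value +\<infinity> never to occur.\<close>

definition rmax_vec :: "('n \<Rightarrow> ereal) \<Rightarrow> bool" where
  "rmax_vec x \<longleftrightarrow> (\<forall>i. x i \<noteq> \<infinity>)"

definition trop_hyperplane :: "('n::finite \<Rightarrow> ereal) \<Rightarrow> ('n \<Rightarrow> ereal) set" where
  "trop_hyperplane b = {y. rmax_vec y \<and>
     (\<exists>i j. i \<noteq> j \<and> b i + y i = (SUP k. b k + y k) \<and> b j + y j = (SUP k. b k + y k))}"

text \<open>Hilbert's projective metric, with d(bot,bot) = 0 and inf of the empty set = +\<infinity>.\<close>
definition hilbert_dist :: "('n \<Rightarrow> ereal) \<Rightarrow> ('n \<Rightarrow> ereal) \<Rightarrow> ereal" where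
  "hilbert_dist x y =
     (if (\<forall>i. x i = -\<infinity>) \<and> (\<forall>i. y i = -\<infinity>) then 0
      else Inf {ereal (l - m) | l m. \<forall>i. ereal m + y i \<le> x i \<and> x i \<le> ereal l + y i})"

definition hausdorff_dir :: "('n \<Rightarrow> ereal) set \<Rightarrow> ('n \<Rightarrow> ereal) set \<Rightarrow> ereal" where
  "hausdorff_dir A B = (SUP a\<in>A. INF y\<in>B. hilbert_dist a y)"

definition columns :: "('n \<Rightarrow> 'p \<Rightarrow> ereal) \<Rightarrow> ('n \<Rightarrow> ereal) set" where
  "columns V = {(\<lambda>i. V i k) | k. True}"

text \<open>The operator T; max over an empty set is -\<infinity> (= Sup {} in ereal).\<close>
definition opT :: "('n \<Rightarrow> 'p \<Rightarrow> ereal) \<Rightarrow> ('n \<Rightarrow> ereal) \<Rightarrow> 'n \<Rightarrow> ereal" where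
  "opT V x i = (INF k\<in>{k. V i k \<noteq> -\<infinity>}. - V i k + (SUP j\<in>{j. j \<noteq> i}. V j k + x j))"

end

theory Submission
  imports Defs
begin

text \<open>Read T(b) \<ge> \<lambda> + b column by column: for a column v and an index i with v_i finite it
  says that the gap v_i + b_i - max_{j \<noteq> i} (v_j + b_j) is at most -\<lambda>. Every gap bounds
  d(v, H_b) from below: if y \<in> H_b and m + y \<le> v \<le> l + y, the maximum of b + y is attained
  at some t \<noteq> i, so v_i + b_i \<le> l + b_t + y_t \<le> (l - m) + v_t + b_t. Conversely, lowering
  the coordinate t at which v + b is maximal by its gap yields a point of H_b (the maximum
  of b + y is then attained at t and at the second maximiser), and this point is at
  distance equal to that gap from v.\<close>

lemma hilbert_dist_le:
  \<comment> \<open>\<open>m \<le> l\<close> is needed because of the convention d(\<bottom>, \<bottom>) = 0.\<close>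
  assumes "\<forall>i. ereal m + y i \<le> x i \<and> x i \<le> ereal l + y i" and "m \<le> l"
  shows "hilbert_dist x y \<le> ereal (l - m)"
proof -
  have "Inf {ereal (l - m) | l m. \<forall>i. ereal m + y i \<le> x i \<and> x i \<le> ereal l + y i}
      \<le> ereal (l - m)"
    using assms(1) by (intro Inf_lower) blast
  then show ?thesis
    using assms(2) unfolding hilbert_dist_def by auto
qed

lemma hilbert_dist_lessE:
  assumes "hilbert_dist x y < ereal r" and "\<exists>i. x i \<noteq> -\<infinity>"
  obtains l m where "\<forall>i. ereal m + y i \<le> x i \<and> x i \<le> ereal l + y i" and "l - m < r"
proof -
  have not_bot: "\<not> ((\<forall>i. x i = -\<infinity>) \<and> (\<forall>i. y i = -\<infinity>))"
    using assms(2) by blast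
  have "Inf {ereal (l - m) | l m. \<forall>i. ereal m + y i \<le> x i \<and> x i \<le> ereal l + y i} < ereal r"
    using assms(1) unfolding hilbert_dist_def if_not_P[OF not_bot] .
  then show thesis
    using that by (auto simp: Inf_less_iff)
qed

lemma SUP_finite_attained:
  fixes f :: "'a \<Rightarrow> 'b::complete_linorder"
  assumes "finite A" and "A \<noteq> {}"
  obtains x where "x \<in> A" and "(SUP a\<in>A. f a) = f x"
proof -
  have "(SUP a\<in>A. f a) \<in> f ` A"
    using assms Max_in[of "f ` A"] Max_Sup[of "f ` A"] by simp
  then show ?thesis
    using that by blast
qed

lemma trop_hyperplaneI:
  assumes "rmax_vec y" and "s \<noteq> t" and "b s + y s = b t + y t"
    and "\<forall>k. b k + y k \<le> b t + y t"
  shows "y \<in> trop_hyperplane b"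
proof -
  have "(SUP k. b k + y k) = b t + y t"
    using assms(4) by (intro antisym SUP_least SUP_upper) auto
  then show ?thesis
    using assms unfolding trop_hyperplane_def by auto
qed

lemma trop_hyperplane_max_elsewhere:
  assumes "y \<in> trop_hyperplane b"
  obtains t where "t \<noteq> i" and "\<forall>k. b k + y k \<le> b t + y t"
proof -
  obtain s s' where "s \<noteq> s'" and "b s + y s = (SUP k. b k + y k)"
    and "b s' + y s' = (SUP k. b k + y k)"
    using assms unfolding trop_hyperplane_def by blast
  then obtain t where "t \<noteq> i" and "b t + y t = (SUP k. b k + y k)"
    by metis
  moreover have "\<forall>k. b k + y k \<le> (SUP k. b k + y k)"
    by (auto intro: SUP_upper)
  ultimately show ?thesis
    using that by metis
qed

lemma trop_hyperplane_gap_le: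
  assumes "y \<in> trop_hyperplane b" and "\<forall>j. ereal m + y j \<le> v j \<and> v j \<le> ereal l + y j"
  shows "v i + b i \<le> ereal (l - m) + (SUP j\<in>{j. j \<noteq> i}. v j + b j)"
proof -
  obtain t where t: "t \<noteq> i" and t_max: "\<forall>k. b k + y k \<le> b t + y t"
    using assms(1) by (rule trop_hyperplane_max_elsewhere)
  have "v i + b i \<le> ereal l + (b i + y i)"
    using assms(2) add_right_mono[of "v i" "ereal l + y i" "b i"] by (simp add: ac_simps)
  also have "\<dots> \<le> ereal l + (b t + y t)"
    using t_max by (simp add: add_left_mono)
  also have "\<dots> = ereal (l - m) + ((ereal m + y t) + b t)"
  proof -
    have "ereal l = ereal (l - m) + ereal m"
      by simp
    then show ?thesis
      by (simp only: ac_simps)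
  qed
  also have "\<dots> \<le> ereal (l - m) + (v t + b t)"
    using assms(2) by (intro add_left_mono add_right_mono) simp
  also have "\<dots> \<le> ereal (l - m) + (SUP j\<in>{j. j \<noteq> i}. v j + b j)"
    using t by (intro add_left_mono SUP_upper) simp
  finally show ?thesis .
qed

lemma self_in_trop_hyperplane:
  assumes "rmax_vec v" and "rmax_vec b" and "v i \<noteq> -\<infinity>" and "b j \<noteq> -\<infinity>"
    and "\<forall>k. v k + b k = -\<infinity>"
  shows "v \<in> trop_hyperplane b"
proof -
  have "i \<noteq> j"
  proof
    assume "i = j"
    then have "v i + b i \<noteq> -\<infinity>"
      using assms(1-4) unfolding rmax_vec_def by (cases "v i"; cases "b i") auto
    then show False
      using assms(5) by simp
  qed
  moreover have bot: "\<And>k. b k + v k = -\<infinity>"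
    using assms(5) by (simp add: add.commute)
  ultimately show ?thesis
    by (intro trop_hyperplaneI[OF assms(1)]) (simp_all only: bot order_refl simp_thms)
qed

lemma lowered_in_trop_hyperplane:
  assumes "rmax_vec v" and "s \<noteq> t" and "v s + b s = ereal r"
    and "\<forall>k. k \<noteq> t \<longrightarrow> v k + b k \<le> ereal r" and "b t = ereal bt"
  shows "v(t := ereal (r - bt)) \<in> trop_hyperplane b"
proof (rule trop_hyperplaneI[of _ s t])
  show "rmax_vec (v(t := ereal (r - bt)))"
    using assms(1) unfolding rmax_vec_def by simp
  show "b s + (v(t := ereal (r - bt))) s = b t + (v(t := ereal (r - bt))) t"
    using assms(2,3,5) by (simp add: add.commute)
  show "\<forall>k. b k + (v(t := ereal (r - bt))) k \<le> b t + (v(t := ereal (r - bt))) t"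
    using assms(4,5) by (auto simp: add.commute)
qed fact

lemma lowered_at_max_near_trop_hyperplane:
  fixes v b :: "'n::finite \<Rightarrow> ereal"
  assumes v: "rmax_vec v" and b: "rmax_vec b"
    and t_max: "\<forall>k. v k + b k \<le> v t + b t" and "v t + b t \<noteq> -\<infinity>"
    and gap_t: "v t + b t \<le> ereal \<mu> + (SUP j\<in>{j. j \<noteq> t}. v j + b j)"
  obtains y where "y \<in> trop_hyperplane b" and "hilbert_dist v y \<le> ereal \<mu>"
proof -
  obtain vt bt where vt: "v t = ereal vt" and bt: "b t = ereal bt"
    using v b \<open>v t + b t \<noteq> -\<infinity>\<close> unfolding rmax_vec_def by (cases "v t"; cases "b t") auto
  define M where "M = (SUP j\<in>{j. j \<noteq> t}. v j + b j)"
  have "M \<noteq> -\<infinity>"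
    using gap_t vt bt unfolding M_def by auto
  then have "{j. j \<noteq> t} \<noteq> {}"
    unfolding M_def by (metis SUP_empty bot_ereal_def)
  then obtain s where "s \<noteq> t" and M_s: "M = v s + b s"
    using SUP_finite_attained[of "{j. j \<noteq> t}" "\<lambda>j. v j + b j"] unfolding M_def by auto
  have M_le: "M \<le> ereal (vt + bt)"
    using M_s t_max vt bt by simp
  with \<open>M \<noteq> -\<infinity>\<close> obtain r where r: "M = ereal r"
    by (cases M) auto
  have "ereal (vt + bt) \<le> ereal \<mu> + ereal r"
    using gap_t vt bt r unfolding M_def by simp
  define \<delta> where "\<delta> = vt + bt - r"
  have "0 \<le> \<delta>" and "\<delta> \<le> \<mu>"
    using M_le \<open>ereal (vt + bt) \<le> ereal \<mu> + ereal r\<close> r unfolding \<delta>_def by auto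
  define y where "y = v(t := ereal (r - bt))"
  have "\<forall>k. k \<noteq> t \<longrightarrow> v k + b k \<le> ereal r"
    unfolding r[symmetric] M_def by (auto intro: SUP_upper)
  then have "y \<in> trop_hyperplane b"
    unfolding y_def using v \<open>s \<noteq> t\<close> M_s r bt by (intro lowered_in_trop_hyperplane) auto
  moreover have "hilbert_dist v y \<le> ereal \<mu>"
  proof -
    have "ereal 0 + y i \<le> v i \<and> v i \<le> ereal \<delta> + y i" for i
      using \<open>0 \<le> \<delta>\<close> vt unfolding y_def \<delta>_def by (cases "i = t"; cases "v i") auto
    then have "hilbert_dist v y \<le> ereal \<delta>"
      using hilbert_dist_le[of 0 y v \<delta>] \<open>0 \<le> \<delta>\<close> by simp
    then show ?thesis
      using \<open>\<delta> \<le> \<mu>\<close> by (simp add: order_trans)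
  qed
  ultimately show ?thesis
    using that by blast
qed

lemma INF_hilbert_dist_trop_hyperplane_le:
  fixes v b :: "'n::finite \<Rightarrow> ereal"
  assumes v: "rmax_vec v" "\<exists>i. v i \<noteq> -\<infinity>" and b: "rmax_vec b" "\<exists>i. b i \<noteq> -\<infinity>"
    and "0 \<le> \<mu>" and gaps: "\<forall>i. v i + b i \<le> ereal \<mu> + (SUP j\<in>{j. j \<noteq> i}. v j + b j)"
  shows "(INF y\<in>trop_hyperplane b. hilbert_dist v y) \<le> ereal \<mu>"
proof (cases "\<forall>k. v k + b k = -\<infinity>")
  case True
  then have "v \<in> trop_hyperplane b"
    using v b self_in_trop_hyperplane by metis
  moreover have "hilbert_dist v v \<le> ereal \<mu>"
    using hilbert_dist_le[of 0 v v 0] \<open>0 \<le> \<mu>\<close> by (simp add: order_trans zero_ereal_def)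
  ultimately show ?thesis
    by (intro INF_lower2[of v])
next
  case False
  obtain t where "(SUP k. v k + b k) = v t + b t"
    using SUP_finite_attained[of UNIV "\<lambda>k. v k + b k"] by auto
  then have t_max: "\<forall>k. v k + b k \<le> v t + b t"
    by (metis SUP_upper UNIV_I)
  from False obtain k where "v k + b k \<noteq> -\<infinity>"
    by blast
  with t_max have "v t + b t \<noteq> -\<infinity>"
    by (metis ereal_infty_less_eq(2))
  then obtain y where "y \<in> trop_hyperplane b" and "hilbert_dist v y \<le> ereal \<mu>"
    using lowered_at_max_near_trop_hyperplane[OF v(1) b(1) t_max] gaps by blast
  then show ?thesis
    by (intro INF_lower2[of y])
qed

lemma trop_gap_le_of_INF_hilbert_dist_le:
  assumes "\<exists>j. v j \<noteq> -\<infinity>" and "(INF y\<in>trop_hyperplane b. hilbert_dist v y) \<le> ereal \<mu>"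
  shows "v i + b i \<le> ereal \<mu> + (SUP j\<in>{j. j \<noteq> i}. v j + b j)"
proof (rule ereal_le_epsilon2)
  fix e :: real
  assume "0 < e"
  then have "(INF y\<in>trop_hyperplane b. hilbert_dist v y) < ereal (\<mu> + e)"
    using assms(2) by (simp add: le_less_trans)
  then obtain y where "y \<in> trop_hyperplane b" and "hilbert_dist v y < ereal (\<mu> + e)"
    by (auto simp: INF_less_iff)
  then obtain l m where lm: "\<forall>j. ereal m + y j \<le> v j \<and> v j \<le> ereal l + y j"
    and "l - m < \<mu> + e"
    using assms(1) by (metis hilbert_dist_lessE)
  have "v i + b i \<le> ereal (l - m) + (SUP j\<in>{j. j \<noteq> i}. v j + b j)"
    using \<open>y \<in> trop_hyperplane b\<close> lm by (rule trop_hyperplane_gap_le)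
  also have "\<dots> \<le> ereal (\<mu> + e) + (SUP j\<in>{j. j \<noteq> i}. v j + b j)"
    using \<open>l - m < \<mu> + e\<close> by (intro add_right_mono) simp
  also have "\<dots> = ereal \<mu> + (SUP j\<in>{j. j \<noteq> i}. v j + b j) + ereal e"
  proof -
    have "ereal (\<mu> + e) = ereal \<mu> + ereal e"
      by simp
    then show ?thesis
      by (simp only: ac_simps)
  qed
  finally show "v i + b i \<le> ereal \<mu> + (SUP j\<in>{j. j \<noteq> i}. v j + b j) + ereal e" .
qed

lemma INF_hilbert_dist_trop_hyperplane_le_iff:
  fixes v b :: "'n::finite \<Rightarrow> ereal"
  assumes "rmax_vec v" and "\<exists>i. v i \<noteq> -\<infinity>" and "rmax_vec b" and "\<exists>i. b i \<noteq> -\<infinity>"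
    and "0 \<le> \<mu>"
  shows "(INF y\<in>trop_hyperplane b. hilbert_dist v y) \<le> ereal \<mu> \<longleftrightarrow>
    (\<forall>i. v i + b i \<le> ereal \<mu> + (SUP j\<in>{j. j \<noteq> i}. v j + b j))"
  using INF_hilbert_dist_trop_hyperplane_le[OF assms]
    trop_gap_le_of_INF_hilbert_dist_le[OF assms(2)] by blast

lemma ereal_le_uminus_add_iff:
  fixes v w z :: ereal
  assumes "v \<noteq> \<infinity>" and "w \<noteq> \<infinity>"
  shows "(v \<noteq> -\<infinity> \<longrightarrow> ereal c + w \<le> - v + z) \<longleftrightarrow> v + w \<le> ereal (- c) + z"
  using assms by (cases v; cases w; cases z) auto

theorem lemma4p5:
  fixes V :: "'n::finite \<Rightarrow> 'p::finite \<Rightarrow> ereal"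
    and b :: "'n \<Rightarrow> ereal" and lam :: ereal
  assumes V_rmax: "\<forall>i k. V i k \<noteq> \<infinity>"
    and no_row: "\<forall>i. \<exists>k. V i k \<noteq> -\<infinity>"
    and no_col: "\<forall>k. \<exists>i. V i k \<noteq> -\<infinity>"
    and lam_le: "lam \<le> 0"
    and b_rmax: "rmax_vec b"
    and b_nonbot: "\<exists>i. b i \<noteq> -\<infinity>"
  shows "(\<forall>i. lam + b i \<le> opT V b i) \<longleftrightarrow>
         hausdorff_dir (columns V) (trop_hyperplane b) \<le> - lam"
proof (cases lam)
  case (real r)
  have opT_iff: "lam + b i \<le> opT V b i \<longleftrightarrow>
      (\<forall>k. V i k + b i \<le> ereal (- r) + (SUP j\<in>{j. j \<noteq> i}. V j k + b j))" for i
    using V_rmax b_rmax ereal_le_uminus_add_iff[of "V i _" "b i" r]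
    unfolding opT_def real rmax_vec_def le_INF_iff by auto
  have column_iff: "(INF y\<in>trop_hyperplane b. hilbert_dist (\<lambda>i. V i k) y) \<le> ereal (- r) \<longleftrightarrow>
      (\<forall>i. V i k + b i \<le> ereal (- r) + (SUP j\<in>{j. j \<noteq> i}. V j k + b j))" for k
    using INF_hilbert_dist_trop_hyperplane_le_iff[of "\<lambda>i. V i k" b "- r"]
      V_rmax no_col b_rmax b_nonbot lam_le real
    unfolding rmax_vec_def by simp
  have "(\<forall>i. lam + b i \<le> opT V b i) \<longleftrightarrow>
      (\<forall>k i. V i k + b i \<le> ereal (- r) + (SUP j\<in>{j. j \<noteq> i}. V j k + b j))"
    using opT_iff by blast
  also have "\<dots> \<longleftrightarrow> (\<forall>k. (INF y\<in>trop_hyperplane b. hilbert_dist (\<lambda>i. V i k) y) \<le> ereal (- r))"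
    using column_iff by blast
  also have "\<dots> \<longleftrightarrow> hausdorff_dir (columns V) (trop_hyperplane b) \<le> - lam"
    unfolding hausdorff_dir_def columns_def real by (auto simp: SUP_le_iff)
  finally show ?thesis .
next
  case PInf
  then show ?thesis
    using lam_le by simp
next
  case MInf
  then have lam_b: "lam + b i = -\<infinity>" for i
    using b_rmax unfolding rmax_vec_def by (cases "b i") auto
  have "\<forall>i. lam + b i \<le> opT V b i"
    unfolding lam_b by simp
  moreover have "hausdorff_dir (columns V) (trop_hyperplane b) \<le> - lam"
    using MInf by simp
  ultimately show ?thesis
    by blast
qed

end
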